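(* Let $H$ be a separable complex Hilbert space, $(\Omega,\mu)$ a measure space with positive measure, and let $K\in B(H)$ have closed range. If $F:\Omega\to H$ is a Parseval continuous $K$-frame of $H$, then $K^{\dagger}F$ (i.e. $\omega\mapsto K^{\dagger}F(\omega)$) is a dual continuous $K$-Bessel sequence of $F$.
   Context: A map $F:\Omega\to H$ is weakly measurable if $\omega\mapsto\langle f,F(\omega)\rangle$ is measurable for every $f\in H$. A continuous Bessel sequence is a weakly measurable $G:\Omega\to H$ with $\int_\Omega|\langle f,G(\omega)\rangle|^2\,d\mu(\omega)\le B\|f\|^2$ for all $f\in H$, for some $B>0$. A Parseval continuous $K$-frame is a weakly measurable $F$ with $\int_\Omega|\langle f,F(\omega)\rangle|^2\,d\mu(\omega)=\|K^{\ast}f\|^2$ for all $f\in H$. A dual continuous $K$-Bessel sequence of $F$ is a continuous Bessel sequence $G$ such that $Kf=\int_\Omega\langle f,G(\omega)\rangle F(\omega)\,d\mu(\omega)$ for all $f\in H$ (weak integral). For $K$ with closed range, $K^{\dagger}\in B(H)$ denotes its Moore–Penrose pseudo-inverse, the unique operator with $KK^\dagger K=K$, $K^\dagger KK^\dagger=K^\dagger$, and $KK^\dagger$, $K^\dagger K$ self-adjoint. *)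

theory Defs
  imports "HOL-Analysis.Analysis"
begin

text \<open>The HOL library only has real inner product spaces, so complex inner
product spaces are introduced here as type classes. The inner product is
linear in the first argument and conjugate-linear in the second.\<close>

class complex_vector = real_vector +
  fixes scaleC :: "complex \<Rightarrow> 'a \<Rightarrow> 'a"  (infixr \<open>*\<^sub>C\<close> 75)
  assumes scaleC_add_right: "a *\<^sub>C (x + y) = a *\<^sub>C x + a *\<^sub>C y"
    and scaleC_add_left: "(a + b) *\<^sub>C x = a *\<^sub>C x + b *\<^sub>C x"
    and scaleC_scaleC: "a *\<^sub>C (b *\<^sub>C x) = (a * b) *\<^sub>C x"
    and scaleC_one: "1 *\<^sub>C x = x"
    and scaleR_scaleC: "scaleR r x = complex_of_real r *\<^sub>C x"

class complex_inner = complex_vector + real_normed_vector +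
  fixes cinner :: "'a \<Rightarrow> 'a \<Rightarrow> complex"
  assumes cinner_commute: "cinner x y = cnj (cinner y x)"
    and cinner_add_left: "cinner (x + y) z = cinner x z + cinner y z"
    and cinner_scaleC_left: "cinner (c *\<^sub>C x) y = c * cinner x y"
    and cinner_nonneg: "0 \<le> Re (cinner x x)"
    and norm_eq_sqrt_cinner: "norm x = sqrt (Re (cinner x x))"

class chilbert_space = complex_inner + complete_space

instantiation complex :: complex_vector
begin
definition scaleC_complex :: "complex \<Rightarrow> complex \<Rightarrow> complex" where
  "scaleC_complex a x = a * x"
instance
  apply standard
  apply (simp_all add: scaleC_complex_def algebra_simps scaleR_conv_of_real)
  done
end
instantiation complex :: complex_inner
begin
definition cinner_complex :: "complex \<Rightarrow> complex \<Rightarrow> complex" where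
  "cinner_complex x y = x * cnj y"
instance
proof
  fix x y z :: complex and c
  show "cinner x y = cnj (cinner y x)" by (simp add: cinner_complex_def)
  show "cinner (x + y) z = cinner x z + cinner y z" by (simp add: cinner_complex_def algebra_simps)
  show "cinner (c *\<^sub>C x) y = c * cinner x y" by (simp add: cinner_complex_def scaleC_complex_def)
  show "0 \<le> Re (cinner x x)" by (simp add: cinner_complex_def complex_mult_cnj)
  show "norm x = sqrt (Re (cinner x x))" by (simp add: cinner_complex_def complex_mult_cnj cmod_def)
qed
end
instance complex :: chilbert_space ..

definition bounded_clinear_op :: "('a::complex_inner \<Rightarrow> 'b::complex_inner) \<Rightarrow> bool" where
  "bounded_clinear_op T \<longleftrightarrow>
     (\<forall>x y. T (x + y) = T x + T y) \<and> (\<forall>c x. T (c *\<^sub>C x) = c *\<^sub>C T x) \<and>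
     (\<exists>B. \<forall>x. norm (T x) \<le> B * norm x)"

definition is_adjoint :: "('a::complex_inner \<Rightarrow> 'b::complex_inner) \<Rightarrow> ('b \<Rightarrow> 'a) \<Rightarrow> bool" where
  "is_adjoint T A \<longleftrightarrow> (\<forall>x y. cinner (T x) y = cinner x (A y))"

definition self_adjoint :: "('a::complex_inner \<Rightarrow> 'a) \<Rightarrow> bool" where
  "self_adjoint T \<longleftrightarrow> is_adjoint T T"

definition is_MP_pseudo_inverse :: "('a::complex_inner \<Rightarrow> 'a) \<Rightarrow> ('a \<Rightarrow> 'a) \<Rightarrow> bool" where
  "is_MP_pseudo_inverse K Kd \<longleftrightarrow>
     bounded_clinear_op Kd \<and> K \<circ> Kd \<circ> K = K \<and> Kd \<circ> K \<circ> Kd = Kd \<and>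
     self_adjoint (K \<circ> Kd) \<and> self_adjoint (Kd \<circ> K)"

definition weakly_measurable :: "'w measure \<Rightarrow> ('w \<Rightarrow> 'h::complex_inner) \<Rightarrow> bool" where
  "weakly_measurable M F \<longleftrightarrow> (\<forall>f. (\<lambda>\<omega>. cinner f (F \<omega>)) \<in> borel_measurable M)"

definition cont_bessel :: "'w measure \<Rightarrow> ('w \<Rightarrow> 'h::complex_inner) \<Rightarrow> bool" where
  "cont_bessel M G \<longleftrightarrow> weakly_measurable M G \<and>
     (\<exists>B>0. \<forall>f. (\<integral>\<^sup>+\<omega>. ennreal ((cmod (cinner f (G \<omega>)))\<^sup>2) \<partial>M) \<le> ennreal (B * (norm f)\<^sup>2))"

text \<open>Parseval continuous K-frame; Ks is the adjoint K* of K.\<close>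
definition parseval_cont_K_frame ::
    "'w measure \<Rightarrow> ('h::complex_inner \<Rightarrow> 'h) \<Rightarrow> ('w \<Rightarrow> 'h) \<Rightarrow> bool" where
  "parseval_cont_K_frame M Ks F \<longleftrightarrow> weakly_measurable M F \<and>
     (\<forall>f. (\<integral>\<^sup>+\<omega>. ennreal ((cmod (cinner f (F \<omega>)))\<^sup>2) \<partial>M) = ennreal ((norm (Ks f))\<^sup>2))"

text \<open>K f equals the weak integral of \<omega> \<mapsto> <f, G \<omega>> F \<omega>: for every h the scalar function
  \<omega> \<mapsto> <f, G \<omega>> <F \<omega>, h> is integrable with integral <K f, h>.\<close>
definition weak_integral_repr ::
    "'w measure \<Rightarrow> ('h::complex_inner \<Rightarrow> 'h) \<Rightarrow> ('w \<Rightarrow> 'h) \<Rightarrow> ('w \<Rightarrow> 'h) \<Rightarrow> bool" where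
  "weak_integral_repr M K F G \<longleftrightarrow> (\<forall>f h.
     integrable M (\<lambda>\<omega>. cinner f (G \<omega>) * cinner (F \<omega>) h) \<and>
     cinner (K f) h = (\<integral>\<omega>. cinner f (G \<omega>) * cinner (F \<omega>) h \<partial>M))"

definition dual_cont_K_bessel ::
    "'w measure \<Rightarrow> ('h::complex_inner \<Rightarrow> 'h) \<Rightarrow> ('w \<Rightarrow> 'h) \<Rightarrow> ('w \<Rightarrow> 'h) \<Rightarrow> bool" where
  "dual_cont_K_bessel M K F G \<longleftrightarrow> cont_bessel M G \<and> weak_integral_repr M K F G"

end

theory Submission
  imports Defs
begin

text \<open>Write Kd for the pseudo-inverse and Kds for its adjoint. Then
  <f, Kd (F w)> = <Kds f, F w>, so Kd F is Bessel because F is, and polarizing the Parseval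
  identity turns the integral of <f, Kd (F w)> <F w, h> into
  <Ks (Kds f), Ks h> = <K (Kd (K f)), h> = <K f, h>, because Ks Kds = (Kd K)* = Kd K.
  Adjoints of bounded operators exist by the Riesz representation theorem, which is obtained
  from the point of minimal norm of a closed affine hyperplane.\<close>

lemma cinner_add_right: "cinner x (y + z) = cinner x y + cinner (x::'a::complex_inner) z"
  by (metis cinner_commute cinner_add_left complex_cnj_add)

lemma cinner_scaleC_right: "cinner x (c *\<^sub>C y) = cnj c * cinner (x::'a::complex_inner) y"
  by (metis cinner_commute cinner_scaleC_left complex_cnj_mult)

lemma cinner_diff_left: "cinner (x - y) (z::'a::complex_inner) = cinner x z - cinner y z"
  using cinner_add_left[of "x - y" y z] by simp

lemma cinner_diff_right: "cinner x (y - (z::'a::complex_inner)) = cinner x y - cinner x z"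
  by (metis cinner_commute cinner_diff_left complex_cnj_diff)

lemma cinner_zero_right [simp]: "cinner (x::'a::complex_inner) 0 = 0"
  using cinner_diff_right[of x 0 0] by simp

lemma scaleC_zero_left [simp]: "(0::complex) *\<^sub>C (x::'a::complex_vector) = 0"
  using scaleR_scaleC[of 0 x] by simp

lemma scaleC_minus_left: "(- c) *\<^sub>C (x::'a::complex_vector) = - (c *\<^sub>C x)"
  using scaleC_add_left[of "- c" c x] by (simp add: eq_neg_iff_add_eq_0)

lemma cinner_self: "cinner x x = complex_of_real ((norm (x::'a::complex_inner))\<^sup>2)"
proof -
  have "Im (cinner x x) = 0"
    using arg_cong[OF cinner_commute[of x x], of Im] by simp
  moreover have "Re (cinner x x) = (norm x)\<^sup>2"
    using norm_eq_sqrt_cinner[of x] cinner_nonneg[of x] by simp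
  ultimately show ?thesis by (simp add: complex_eq_iff)
qed

lemma cinner_ext: "(\<And>x. cinner x a = cinner x (b::'a::complex_inner)) \<Longrightarrow> a = b"
  using cinner_diff_right[of "a - b" a b] by (simp add: cinner_self)

lemma norm_add_scaleC_power2:
  fixes x y :: "'a::complex_inner"
  shows "complex_of_real ((norm (x + c *\<^sub>C y))\<^sup>2)
     = cinner x x + cnj c * cinner x y + c * cinner y x + c * cnj c * cinner y y"
  unfolding cinner_self[symmetric]
  by (simp add: cinner_add_left cinner_add_right cinner_scaleC_left cinner_scaleC_right
      algebra_simps)

lemma cinner_polarization:
  fixes x y :: "'a::complex_inner"
  shows "cinner x y = (\<Sum>k<4. \<i> ^ k * complex_of_real ((norm (x + (\<i> ^ k) *\<^sub>C y))\<^sup>2)) / 4"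
  unfolding norm_add_scaleC_power2 by (simp add: numeral_eq_Suc algebra_simps)

lemma norm_diff_projection_power2:
  fixes x y :: "'a::complex_inner"
  assumes "y \<noteq> 0"
  shows "(norm (x - (cinner x y / complex_of_real ((norm y)\<^sup>2)) *\<^sub>C y))\<^sup>2
       = (norm x)\<^sup>2 - (cmod (cinner x y))\<^sup>2 / (norm y)\<^sup>2"
proof -
  define a where "a = cinner x y"
  define r where "r = complex_of_real ((norm y)\<^sup>2)"
  have "r \<noteq> 0" using assms by (simp add: r_def)
  have "complex_of_real ((norm (x - (a / r) *\<^sub>C y))\<^sup>2)
      = complex_of_real ((norm (x + (- (a / r)) *\<^sub>C y))\<^sup>2)"
    by (simp add: scaleC_minus_left)
  also have "\<dots> = cinner x x - a * cnj a / r"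
    unfolding norm_add_scaleC_power2 using \<open>r \<noteq> 0\<close>
    by (simp add: cinner_self[of y, folded r_def] cinner_commute[of y x, folded a_def]
        a_def[symmetric] r_def field_simps)
  also have "\<dots> = complex_of_real ((norm x)\<^sup>2 - (cmod a)\<^sup>2 / (norm y)\<^sup>2)"
    by (simp only: of_real_diff of_real_divide complex_norm_square cinner_self r_def)
  finally show ?thesis by (simp only: of_real_eq_iff a_def r_def)
qed

lemma cinner_Cauchy_Schwarz: "cmod (cinner x y) \<le> norm x * norm (y::'a::complex_inner)"
proof (cases "y = 0")
  case False
  have "(cmod (cinner x y))\<^sup>2 / (norm y)\<^sup>2 \<le> (norm x)\<^sup>2"
    using norm_diff_projection_power2[OF False, of x] by (metis diff_ge_0_iff_ge zero_le_power2)
  then have "(cmod (cinner x y))\<^sup>2 \<le> (norm x * norm y)\<^sup>2"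
    using False by (simp add: pos_divide_le_eq power_mult_distrib)
  then show ?thesis by (rule power2_le_imp_le) simp
qed simp

lemma parallelogram_law:
  fixes x y :: "'a::complex_inner"
  shows "(norm (x + y))\<^sup>2 + (norm (x - y))\<^sup>2 = 2 * (norm x)\<^sup>2 + 2 * (norm y)\<^sup>2"
proof -
  have "cinner (x + y) (x + y) + cinner (x - y) (x - y) = 2 * cinner x x + 2 * cinner y y"
    by (simp add: cinner_add_left cinner_add_right cinner_diff_left cinner_diff_right)
  from arg_cong[OF this, of Re] show ?thesis
    by (simp add: cinner_self)
qed

lemma minimizing_sequence_Cauchy:
  fixes S :: "'a::complex_inner set"
  assumes "convex S" and Y: "\<And>n. Y n \<in> S" and d: "\<And>y. y \<in> S \<Longrightarrow> d \<le> (norm y)\<^sup>2"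
    and Y_d: "\<And>n. (norm (Y n))\<^sup>2 \<le> d + 1 / real (Suc n)"
  shows "Cauchy Y"
proof (rule CauchyI)
  have mid: "4 * d \<le> (norm (Y m + Y n))\<^sup>2" for m n
  proof -
    have "(1/2) *\<^sub>R Y m + (1/2) *\<^sub>R Y n \<in> S"
      using convexD[OF \<open>convex S\<close> Y Y] by simp
    then have "d \<le> (norm ((1/2) *\<^sub>R (Y m + Y n)))\<^sup>2"
      using d by (simp add: scaleR_right_distrib)
    then show ?thesis by (simp add: power2_eq_square)
  qed
  have dist: "(norm (Y m - Y n))\<^sup>2 \<le> 2 / real (Suc m) + 2 / real (Suc n)" for m n
    using parallelogram_law[of "Y m" "Y n"] mid[of m n] Y_d[of m] Y_d[of n] by linarith
  fix e :: real
  assume "0 < e"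
  obtain N :: nat where "4 / e\<^sup>2 < real N"
    using reals_Archimedean2 by blast
  then have "4 < real (Suc N) * e\<^sup>2"
    using \<open>0 < e\<close> by (simp add: pos_divide_less_eq) (smt (verit) mult_right_mono zero_le_power2)
  then have N: "4 / real (Suc N) < e\<^sup>2"
    by (simp add: divide_less_eq mult.commute)
  show "\<exists>N. \<forall>m\<ge>N. \<forall>n\<ge>N. norm (Y m - Y n) < e"
  proof (intro exI allI impI)
    fix m n
    assume "N \<le> m" "N \<le> n"
    then have "2 / real (Suc m) \<le> 2 / real (Suc N)" "2 / real (Suc n) \<le> 2 / real (Suc N)"
      by (simp_all add: frac_le)
    then have "(norm (Y m - Y n))\<^sup>2 < e\<^sup>2"
      using dist[of m n] N add_divide_distrib[of 2 2 "real (Suc N)"] by simp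
    then show "norm (Y m - Y n) < e"
      using \<open>0 < e\<close> by (simp add: power_less_imp_less_base)
  qed
qed

lemma closed_convex_has_min_norm:
  fixes S :: "'a::chilbert_space set"
  assumes "closed S" and "convex S" and "S \<noteq> {}"
  obtains z where "z \<in> S" and "\<And>y. y \<in> S \<Longrightarrow> norm z \<le> norm y"
proof -
  define d where "d = Inf ((\<lambda>y. (norm y)\<^sup>2) ` S)"
  have bdd: "bdd_below ((\<lambda>y. (norm y)\<^sup>2) ` S)"
    by (rule bdd_belowI[of _ 0]) auto
  have d_le: "d \<le> (norm y)\<^sup>2" if "y \<in> S" for y
    unfolding d_def using that by (intro cInf_lower[OF _ bdd]) auto
  have "\<exists>y. y \<in> S \<and> (norm y)\<^sup>2 < d + 1 / real (Suc n)" for n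
  proof -
    have "Inf ((\<lambda>y. (norm y)\<^sup>2) ` S) < d + 1 / real (Suc n)"
      unfolding d_def[symmetric] by simp
    from cInf_lessD[OF _ this] show ?thesis
      using \<open>S \<noteq> {}\<close> by blast
  qed
  then obtain Y where Y: "\<And>n. Y n \<in> S" and Y_d: "\<And>n. (norm (Y n))\<^sup>2 < d + 1 / real (Suc n)"
    by metis
  have "Cauchy Y"
    by (rule minimizing_sequence_Cauchy[OF \<open>convex S\<close> Y d_le less_imp_le[OF Y_d]])
  then obtain z where Yz: "Y \<longlonglongrightarrow> z"
    using Cauchy_convergent_iff convergent_def by auto
  have "z \<in> S"
    using closed_sequentially[OF \<open>closed S\<close> Y Yz] .
  have z_d: "(norm z)\<^sup>2 \<le> d"
  proof (rule LIMSEQ_le)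
    show "(\<lambda>n. (norm (Y n))\<^sup>2) \<longlonglongrightarrow> (norm z)\<^sup>2"
      by (intro tendsto_intros Yz)
    show "(\<lambda>n. d + 1 / real (Suc n)) \<longlonglongrightarrow> d"
      using tendsto_add[OF tendsto_const LIMSEQ_Suc[OF lim_1_over_n], of d] by simp
    show "\<exists>N. \<forall>n\<ge>N. (norm (Y n))\<^sup>2 \<le> d + 1 / real (Suc n)"
      using less_imp_le[OF Y_d] by blast
  qed
  have "norm z \<le> norm y" if "y \<in> S" for y
    by (rule power2_le_imp_le[OF order_trans[OF z_d d_le[OF that]]]) simp
  with \<open>z \<in> S\<close> show ?thesis
    by (rule that)
qed

lemma cinner_eq_0_if_norm_le_norm_diff_scaleC:
  fixes z n :: "'a::complex_inner"
  assumes "\<And>c. norm z \<le> norm (z - c *\<^sub>C n)"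
  shows "cinner z n = 0"
proof (cases "n = 0")
  case False
  have "(norm z)\<^sup>2 \<le> (norm (z - (cinner z n / complex_of_real ((norm n)\<^sup>2)) *\<^sub>C n))\<^sup>2"
    using assms by (simp add: power_mono)
  then have "(cmod (cinner z n))\<^sup>2 / (norm n)\<^sup>2 \<le> 0"
    unfolding norm_diff_projection_power2[OF False] by simp
  then show ?thesis
    using False by (simp add: divide_le_0_iff)
qed simp

lemma bounded_clinear_op_imp_bounded_linear:
  assumes "bounded_clinear_op T"
  shows "bounded_linear T"
proof -
  obtain B where add: "\<And>x y. T (x + y) = T x + T y" and scale: "\<And>c x. T (c *\<^sub>C x) = c *\<^sub>C T x"
    and B: "\<And>x. norm (T x) \<le> B * norm x"
    using assms unfolding bounded_clinear_op_def by blast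
  show ?thesis
  proof (rule bounded_linear_intro[where K = B])
    show "T (r *\<^sub>R x) = r *\<^sub>R T x" for r x
      by (simp add: scaleR_scaleC scale)
  qed (simp_all add: add B mult.commute)
qed

lemma riesz_representation:
  fixes \<phi> :: "'a::chilbert_space \<Rightarrow> complex"
  assumes "bounded_clinear_op \<phi>"
  obtains w where "\<And>x. \<phi> x = cinner x w"
proof (cases "\<forall>x. \<phi> x = 0")
  case True
  then show ?thesis using that[of 0] by simp
next
  case False
  then obtain x0 where "\<phi> x0 \<noteq> 0" by blast
  have scale: "\<phi> (c *\<^sub>C x) = c * \<phi> x" for c x
    using assms by (simp add: bounded_clinear_op_def scaleC_complex_def)
  have lin: "bounded_linear \<phi>"
    by (rule bounded_clinear_op_imp_bounded_linear[OF assms])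
  \<comment> \<open>The point of minimal norm of the hyperplane phi = 1 is orthogonal to the kernel of phi,
    so a multiple of it represents phi.\<close>
  define S where "S = \<phi> -` {1}"
  have "closed S"
    unfolding S_def by (intro closed_vimage closed_singleton linear_continuous_on lin)
  moreover have "convex S"
    unfolding S_def by (intro convex_linear_vimage convex_singleton bounded_linear.linear[OF lin])
  moreover have "(1 / \<phi> x0) *\<^sub>C x0 \<in> S"
    using \<open>\<phi> x0 \<noteq> 0\<close> by (simp add: S_def scale)
  ultimately obtain z where "z \<in> S" and z_min: "\<And>y. y \<in> S \<Longrightarrow> norm z \<le> norm y"
    using closed_convex_has_min_norm by blast
  have z1: "\<phi> z = 1" using \<open>z \<in> S\<close> by (simp add: S_def)
  have orth: "cinner z n = 0" if "\<phi> n = 0" for n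
    using z_min z1 that
    by (intro cinner_eq_0_if_norm_le_norm_diff_scaleC)
      (simp add: S_def linear_diff[OF bounded_linear.linear[OF lin]] scale)
  have "z \<noteq> 0"
    using z1 linear_0[OF bounded_linear.linear[OF lin]] by auto
  show ?thesis
  proof (rule that)
    fix x
    have "cinner z (x - \<phi> x *\<^sub>C z) = 0"
      by (rule orth) (simp add: linear_diff[OF bounded_linear.linear[OF lin]] scale z1)
    then have "cinner z x = cnj (\<phi> x) * complex_of_real ((norm z)\<^sup>2)"
      by (simp add: cinner_diff_right cinner_scaleC_right cinner_self)
    then have "cinner x z = \<phi> x * complex_of_real ((norm z)\<^sup>2)"
      using cinner_commute[of x z] by simp
    then show "\<phi> x = cinner x (complex_of_real (1 / (norm z)\<^sup>2) *\<^sub>C z)"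
      using \<open>z \<noteq> 0\<close> by (simp add: cinner_scaleC_right)
  qed
qed

lemma is_adjoint_exists:
  fixes T :: "'a::chilbert_space \<Rightarrow> 'b::complex_inner"
  assumes "bounded_clinear_op T"
  obtains A where "is_adjoint T A"
proof -
  obtain B where add: "\<And>x y. T (x + y) = T x + T y" and scale: "\<And>c x. T (c *\<^sub>C x) = c *\<^sub>C T x"
    and B: "\<And>x. norm (T x) \<le> B * norm x"
    using assms unfolding bounded_clinear_op_def by blast
  have "\<exists>w. \<forall>x. cinner (T x) y = cinner x w" for y
  proof -
    have "bounded_clinear_op (\<lambda>x. cinner (T x) y)"
      unfolding bounded_clinear_op_def
    proof (intro conjI allI exI[of _ "B * norm y"])
      show "cinner (T (x + x')) y = cinner (T x) y + cinner (T x') y" for x x'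
        by (simp add: add cinner_add_left)
      show "cinner (T (c *\<^sub>C x)) y = c *\<^sub>C cinner (T x) y" for c x
        by (simp add: scale cinner_scaleC_left scaleC_complex_def)
      show "norm (cinner (T x) y) \<le> B * norm y * norm x" for x
        using cinner_Cauchy_Schwarz[of "T x" y] mult_right_mono[OF B[of x] norm_ge_zero[of y]]
        by (simp add: ac_simps)
    qed
    then show ?thesis
      using riesz_representation by metis
  qed
  then obtain A where "\<And>x y. cinner (T x) y = cinner x (A y)"
    by metis
  then show thesis
    by (intro that[of A]) (simp add: is_adjoint_def)
qed

lemma is_adjoint_unique: "is_adjoint T A \<Longrightarrow> is_adjoint T A' \<Longrightarrow> A = A'"
  unfolding is_adjoint_def by (metis cinner_ext ext)

lemma is_adjoint_comp: "is_adjoint A As \<Longrightarrow> is_adjoint B Bs \<Longrightarrow> is_adjoint (A \<circ> B) (Bs \<circ> As)"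
  unfolding is_adjoint_def by simp

lemma is_adjoint_cinner_right: "is_adjoint T A \<Longrightarrow> cinner x (T y) = cinner (A x) y"
  unfolding is_adjoint_def by (metis cinner_commute)

lemma is_adjoint_add_scaleC:
  assumes "is_adjoint T A"
  shows "A (x + c *\<^sub>C y) = A x + c *\<^sub>C A y"
proof (rule cinner_ext)
  have adj: "cinner z (A w) = cinner (T z) w" for z w
    using assms by (simp add: is_adjoint_def)
  show "cinner z (A (x + c *\<^sub>C y)) = cinner z (A x + c *\<^sub>C A y)" for z
    by (simp add: adj cinner_add_right cinner_scaleC_right)
qed

lemma is_adjoint_norm_bound:
  assumes "is_adjoint T A" and "bounded_clinear_op T"
  obtains C where "C \<ge> 0" and "\<And>y. norm (A y) \<le> C * norm y"
proof -
  obtain C where "C \<ge> 0" and C: "\<And>x. norm (T x) \<le> norm x * C"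
    using bounded_linear.nonneg_bounded[OF bounded_clinear_op_imp_bounded_linear[OF assms(2)]]
    by blast
  have "norm (A y) \<le> C * norm y" for y
  proof (cases "A y = 0")
    case False
    have "norm (A y) * norm (A y) = cmod (cinner (A y) (A y))"
      by (simp add: cinner_self power2_eq_square norm_mult)
    also have "\<dots> = cmod (cinner (T (A y)) y)"
      using assms(1) by (simp add: is_adjoint_def)
    also have "\<dots> \<le> norm (T (A y)) * norm y"
      by (rule cinner_Cauchy_Schwarz)
    also have "\<dots> \<le> norm (A y) * (C * norm y)"
      using mult_right_mono[OF C[of "A y"] norm_ge_zero[of y]] by (simp add: ac_simps)
    finally show ?thesis
      using False by (simp add: mult_le_cancel_left_pos)
  qed (simp add: \<open>C \<ge> 0\<close>)
  with \<open>C \<ge> 0\<close> show thesis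
    by (rule that)
qed

lemma parseval_cont_K_frame_cont_bessel:
  assumes "parseval_cont_K_frame M Ks F" and "is_adjoint K Ks" and "bounded_clinear_op K"
  shows "cont_bessel M F"
proof -
  obtain C where "C \<ge> 0" and C: "\<And>f. norm (Ks f) \<le> C * norm f"
    using is_adjoint_norm_bound[OF assms(2,3)] by blast
  have "(norm (Ks f))\<^sup>2 \<le> (C\<^sup>2 + 1) * (norm f)\<^sup>2" for f
  proof -
    have "(norm (Ks f))\<^sup>2 \<le> (C * norm f)\<^sup>2"
      using C[of f] by (simp add: power_mono)
    then show ?thesis
      by (simp add: power_mult_distrib algebra_simps add_increasing)
  qed
  then show ?thesis
    using assms(1) unfolding cont_bessel_def parseval_cont_K_frame_def
    by (intro conjI exI[of _ "C\<^sup>2 + 1"]) (auto intro: ennreal_leI add_nonneg_pos)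
qed

lemma cont_bessel_comp:
  fixes F :: "'w \<Rightarrow> 'h::chilbert_space" and T :: "'h \<Rightarrow> 'k::complex_inner"
  assumes "cont_bessel M F" and "bounded_clinear_op T"
  shows "cont_bessel M (\<lambda>\<omega>. T (F \<omega>))"
proof -
  obtain A where A: "is_adjoint T A"
    using is_adjoint_exists[OF assms(2)] .
  obtain C where "C \<ge> 0" and C: "\<And>f. norm (A f) \<le> C * norm f"
    using is_adjoint_norm_bound[OF A assms(2)] by blast
  obtain B where "B > 0" and wm: "weakly_measurable M F"
    and B: "\<And>f. (\<integral>\<^sup>+\<omega>. ennreal ((cmod (cinner f (F \<omega>)))\<^sup>2) \<partial>M) \<le> ennreal (B * (norm f)\<^sup>2)"
    using assms(1) unfolding cont_bessel_def by blast
  have "weakly_measurable M (\<lambda>\<omega>. T (F \<omega>))"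
    using wm by (simp add: weakly_measurable_def is_adjoint_cinner_right[OF A])
  moreover have "(\<integral>\<^sup>+\<omega>. ennreal ((cmod (cinner f (T (F \<omega>))))\<^sup>2) \<partial>M)
      \<le> ennreal (B * (C\<^sup>2 + 1) * (norm f)\<^sup>2)" for f
  proof -
    have "(norm (A f))\<^sup>2 \<le> (C\<^sup>2 + 1) * (norm f)\<^sup>2"
      using power_mono[OF C[of f] norm_ge_zero, of 2]
      by (simp add: power_mult_distrib algebra_simps add_increasing)
    then have "B * (norm (A f))\<^sup>2 \<le> B * (C\<^sup>2 + 1) * (norm f)\<^sup>2"
      using \<open>B > 0\<close> by simp
    then show ?thesis
      using B[of "A f"] by (simp add: is_adjoint_cinner_right[OF A] order_trans ennreal_leI)
  qed
  ultimately show ?thesis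
    using \<open>B > 0\<close> unfolding cont_bessel_def
    by (intro conjI exI[of _ "B * (C\<^sup>2 + 1)"]) (auto intro!: mult_pos_pos add_nonneg_pos)
qed

lemma parseval_cont_K_frame_cinner_integral:
  fixes F :: "'w \<Rightarrow> 'h::complex_inner"
  assumes "parseval_cont_K_frame M Ks F" and "is_adjoint K Ks"
  shows "integrable M (\<lambda>\<omega>. cinner g (F \<omega>) * cinner (F \<omega>) h)"
    and "(\<integral>\<omega>. cinner g (F \<omega>) * cinner (F \<omega>) h \<partial>M) = cinner (Ks g) (Ks h)"
proof -
  have meas: "(\<lambda>\<omega>. cinner u (F \<omega>)) \<in> borel_measurable M"
    and parseval: "(\<integral>\<^sup>+\<omega>. ennreal ((cmod (cinner u (F \<omega>)))\<^sup>2) \<partial>M) = ennreal ((norm (Ks u))\<^sup>2)" for u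
    using assms(1) unfolding parseval_cont_K_frame_def weakly_measurable_def by blast+
  define q where "q u \<omega> = (cmod (cinner u (F \<omega>)))\<^sup>2" for u \<omega>
  have q_meas: "q u \<in> borel_measurable M" for u
    unfolding q_def[abs_def] using meas[of u] by measurable
  have q_int: "integrable M (q u)" for u
    using q_meas by (rule integrableI_nonneg) (simp_all add: q_def parseval)
  have q_integral: "integral\<^sup>L M (q u) = (norm (Ks u))\<^sup>2" for u
    by (subst integral_eq_nn_integral[OF q_meas]) (simp_all add: q_def parseval)
  define p where "p \<omega> = (\<Sum>k<4. \<i> ^ k * complex_of_real (q (g + \<i> ^ k *\<^sub>C h) \<omega>)) / 4" for \<omega>
  have p: "(\<lambda>\<omega>. cinner g (F \<omega>) * cinner (F \<omega>) h) = p"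
  proof
    fix \<omega>
    have "cinner g (F \<omega>) * cinner (F \<omega>) h = cinner (cinner g (F \<omega>)) (cinner h (F \<omega>))"
      by (simp add: cinner_complex_def cinner_commute[of "F \<omega>" h])
    also have "\<dots> = p \<omega>"
      unfolding cinner_polarization[of "cinner g (F \<omega>)"] p_def q_def
      by (simp add: cinner_add_left cinner_scaleC_left scaleC_complex_def)
    finally show "cinner g (F \<omega>) * cinner (F \<omega>) h = p \<omega>" .
  qed
  show "integrable M (\<lambda>\<omega>. cinner g (F \<omega>) * cinner (F \<omega>) h)"
    unfolding p p_def by (simp add: q_int)
  have "integral\<^sup>L M p
      = (\<Sum>k<4. \<i> ^ k * complex_of_real ((norm (Ks g + \<i> ^ k *\<^sub>C Ks h))\<^sup>2)) / 4"
    unfolding p_def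
    by (simp add: integral_sum q_int q_integral is_adjoint_add_scaleC[OF assms(2)]
        del: of_real_power)
  also have "\<dots> = cinner (Ks g) (Ks h)"
    by (rule cinner_polarization[symmetric])
  finally show "(\<integral>\<omega>. cinner g (F \<omega>) * cinner (F \<omega>) h \<partial>M) = cinner (Ks g) (Ks h)"
    unfolding p .
qed

theorem lemma3p2:
  fixes M :: "'w measure"
    and K Ks Kd :: "'h::chilbert_space \<Rightarrow> 'h"
    and F :: "'w \<Rightarrow> 'h"
  assumes "separable_space (euclidean :: 'h topology)"
    and "bounded_clinear_op K"
    and "closed (range K)"
    and "is_adjoint K Ks"
    and "is_MP_pseudo_inverse K Kd"
    and "parseval_cont_K_frame M Ks F"
  shows "dual_cont_K_bessel M K F (\<lambda>\<omega>. Kd (F \<omega>))"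
proof -
  have Kd: "bounded_clinear_op Kd" and KKdK: "K \<circ> Kd \<circ> K = K"
    and KdK: "is_adjoint (Kd \<circ> K) (Kd \<circ> K)"
    using assms(5) unfolding is_MP_pseudo_inverse_def self_adjoint_def by blast+
  obtain Kds where Kds: "is_adjoint Kd Kds"
    using is_adjoint_exists[OF Kd] .
  have Ks_Kds: "Ks (Kds f) = Kd (K f)" for f
    using is_adjoint_unique[OF is_adjoint_comp[OF Kds assms(4)] KdK] by (simp add: fun_eq_iff)
  have "cont_bessel M (\<lambda>\<omega>. Kd (F \<omega>))"
    by (rule cont_bessel_comp[OF parseval_cont_K_frame_cont_bessel[OF assms(6,4,2)] Kd])
  moreover have "weak_integral_repr M K F (\<lambda>\<omega>. Kd (F \<omega>))"
    unfolding weak_integral_repr_def is_adjoint_cinner_right[OF Kds]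
  proof (intro allI conjI)
    fix f h
    show "integrable M (\<lambda>\<omega>. cinner (Kds f) (F \<omega>) * cinner (F \<omega>) h)"
      by (rule parseval_cont_K_frame_cinner_integral(1)[OF assms(6,4)])
    have "cinner (K f) h = cinner (K (Ks (Kds f))) h"
      using fun_cong[OF KKdK, of f] by (simp add: Ks_Kds)
    also have "\<dots> = (\<integral>\<omega>. cinner (Kds f) (F \<omega>) * cinner (F \<omega>) h \<partial>M)"
      using assms(4)
      by (simp add: is_adjoint_def parseval_cont_K_frame_cinner_integral(2)[OF assms(6,4)])
    finally show "cinner (K f) h = (\<integral>\<omega>. cinner (Kds f) (F \<omega>) * cinner (F \<omega>) h \<partial>M)" .
  qed
  ultimately show ?thesis
    unfolding dual_cont_K_bessel_def ..
qed

end
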